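(* Let $p(x),q(x)\in\mathbb{C}[x]$, let $b\geq 2$ be an integer, and let $\alpha=(\alpha_0,\dots,\alpha_{m-1})\in\mathbb{N}^m$. Then the function $n\mapsto u_{p,q,b,\alpha}(n)$ has a rational generating function; that is, there exist $P(x),Q(x)\in\mathbb{C}[x]$ with $Q(0)\neq 0$ such that $\sum_{n\geq 0}u_{p,q,b,\alpha}(n)x^n=P(x)/Q(x)$ as formal power series.
   Context: $\mathbb{N}=\{0,1,2,\dots\}$. For $n\geq 0$ define $F_{p,q,b,n}(x)=q(x)\prod_{i=0}^{n-1}p(x^{b^i})=\sum_{i\geq 0}c_i(n)x^i$, with the convention $c_i(n)=0$ for $i<0$. Define $$u_{p,q,b,\alpha}(n)=\sum_{k} c_k(n)^{\alpha_0}c_{k+1}(n)^{\alpha_1}\cdots c_{k+m-1}(n)^{\alpha_{m-1}},$$ the sum over all integers $k$ (only finitely many terms are nonzero when some exponent is positive; take $0^0=1$ and assume $\alpha\neq 0$). *)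

theory Defs
  imports "HOL-Analysis.Analysis" "HOL-Computational_Algebra.Computational_Algebra"
begin

definition Fpoly :: "complex poly \<Rightarrow> complex poly \<Rightarrow> nat \<Rightarrow> nat \<Rightarrow> complex poly" where
  "Fpoly p q b n = q * (\<Prod>i<n. pcompose p (monom 1 (b ^ i)))"

definition cF :: "complex poly \<Rightarrow> complex poly \<Rightarrow> nat \<Rightarrow> nat \<Rightarrow> int \<Rightarrow> complex" where
  "cF p q b n i = (if i < 0 then 0 else coeff (Fpoly p q b n) (nat i))"

text \<open>u_{p,q,b,alpha}(n): sum over all integers k of
  prod_{j<m} c_{k+j}(n)^alpha_j, where alpha = (alpha_0,...,alpha_{m-1}) is a list
  (only finitely many terms are nonzero when some alpha_j > 0).\<close>
definition u :: "complex poly \<Rightarrow> complex poly \<Rightarrow> nat \<Rightarrow> nat list \<Rightarrow> nat \<Rightarrow> complex" where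
  "u p q b \<alpha> n = (\<Sum>\<^sub>\<infinity>k\<in>(UNIV::int set).
      \<Prod>j<length \<alpha>. cF p q b n (k + int j) ^ (\<alpha> ! j))"

end

theory Submission
  imports Defs "HOL-Library.Function_Algebras"
begin

(* Let g_n be the coefficient sequence of G_n = prod_{i<n} p(x^(b^i)), extended by 0 to negative
   indices, and for a finite index set I and shifts h : I -> Z let

     W_n(h) = sum_k prod_{i in I} g_n(k + h_i).

   Since F_{p,q,b,n} = q G_n, expanding the coefficients of q writes u(n) as a fixed linear
   combination of values W_n(h), where I contains each j with multiplicity alpha_j.  Since
   G_{n+1} = p G_n(x^b), splitting k by its residue r mod b expresses W_{n+1}(h) linearly through
   the values W_n(h') with h'_i = (r + h_i - f_i) div b and 0 <= f_i <= deg p, and the box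
   |h_i| <= A is mapped into itself once A >= deg p.  So the vectors (W_n(h)), h in the box, are
   the iterates of one linear map on a finite-dimensional space and satisfy a linear recurrence
   with constant coefficients.  Hence so does u, and its generating function is rational. *)

section \<open>Linear recurrences\<close>

lemma rational_fps_of_linear_recurrence:
  fixes u a :: "nat \<Rightarrow> 'a::field"
  assumes rec: "\<And>n. u (n + k) = (\<Sum>i<k. a i * u (n + i))"
  shows "\<exists>P Q. poly Q 0 \<noteq> 0 \<and> Abs_fps u = fps_of_poly P / fps_of_poly Q"
proof -
  define Q where "Q = 1 - (\<Sum>i<k. monom (a i) (k - i))"
  define R where "R = fps_of_poly Q * Abs_fps u"
  have Q0: "poly Q 0 = 1"
    by (simp add: Q_def poly_sum poly_monom zero_power)
  have "R $ n = 0" if "k \<le> n" for n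
  proof -
    have "R = Abs_fps u - (\<Sum>i<k. fps_const (a i) * (fps_X ^ (k - i) * Abs_fps u))"
      by (simp add: R_def Q_def fps_of_poly_diff fps_of_poly_sum fps_of_poly_monom
          left_diff_distrib sum_distrib_right mult.assoc)
    then have "R $ n = u n - (\<Sum>i<k. a i * u (n - k + i))"
      using that by (auto simp: fps_sum_nth fps_X_power_mult_nth intro!: sum.cong)
    then show ?thesis
      using rec[of "n - k"] that by simp
  qed
  then have "fps_of_poly (truncate_fps k R) = R"
    by (intro fps_ext) auto
  moreover have "fps_of_poly Q \<noteq> 0"
    using Q0 by (metis fps_of_poly_0 fps_of_poly_eq_iff one_neq_zero poly_0)
  ultimately have "Abs_fps u = fps_of_poly (truncate_fps k R) / fps_of_poly Q"
    by (simp add: R_def)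
  with Q0 show ?thesis
    by (intro exI[of _ "truncate_fps k R"] exI[of _ Q]) simp
qed

lemma linear_recurrence_sum:
  fixes w :: "'b \<Rightarrow> nat \<Rightarrow> 'a::comm_semiring_0"
  assumes "\<And>f n. f \<in> D \<Longrightarrow> w f (n + k) = (\<Sum>j<k. a j * w f (n + j))"
  shows "(\<Sum>f\<in>D. c f * w f (n + k)) = (\<Sum>j<k. a j * (\<Sum>f\<in>D. c f * w f (n + j)))"
proof -
  have "(\<Sum>f\<in>D. c f * w f (n + k)) = (\<Sum>f\<in>D. c f * (\<Sum>j<k. a j * w f (n + j)))"
    using assms by (intro sum.cong refl) simp
  also have "\<dots> = (\<Sum>j<k. a j * (\<Sum>f\<in>D. c f * w f (n + j)))"
    by (simp add: sum_distrib_left mult.left_commute sum.swap[of _ D])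
  finally show ?thesis .
qed

context vector_space
begin

lemma independent_image_lessThan:
  fixes v :: "nat \<Rightarrow> 'b"
  assumes "\<And>j. j < k \<Longrightarrow> v j \<notin> span (v ` {..<j})"
  shows "independent (v ` {..<k}) \<and> inj_on v {..<k}"
  using assms
proof (induction k)
  case (Suc k)
  have new: "v k \<notin> span (v ` {..<k})"
    using Suc.prems by simp
  have IH: "independent (v ` {..<k})" "inj_on v {..<k}"
    using Suc by simp_all
  have "v k \<notin> v ` {..<k}"
    using new span_base by metis
  then show ?case
    using independent_insertI[OF new IH(1)] IH(2) by (simp add: lessThan_Suc)
qed (simp add: independent_empty)

lemma linear_recurrence_of_iterates:
  fixes v :: "nat \<Rightarrow> 'b"
  assumes B: "finite B" and span: "\<And>n. v n \<in> span B"
    and L: "Vector_Spaces.linear scale scale L" and step: "\<And>n. v (Suc n) = L (v n)"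
  shows "\<exists>k a. \<forall>n. v (n + k) = (\<Sum>i<k. a i *s v (n + i))"
proof -
  interpret L: Vector_Spaces.linear scale scale L by (fact L)
  have "\<exists>k. v k \<in> span (v ` {..<k})"
  proof (rule ccontr)
    assume "\<nexists>k. v k \<in> span (v ` {..<k})"
    then have "independent (v ` {..<Suc (card B)}) \<and> inj_on v {..<Suc (card B)}"
      by (intro independent_image_lessThan) blast
    moreover have "v ` {..<Suc (card B)} \<subseteq> span B"
      using span by blast
    ultimately have "card (v ` {..<Suc (card B)}) \<le> card B"
      using independent_span_bound[OF B] by simp
    moreover have "card (v ` {..<Suc (card B)}) = Suc (card B)"
      using \<open>_ \<and> inj_on v _\<close> by (simp add: card_image)
    ultimately show False
      by simp
  qed
  \<comment> \<open>By minimality of \<open>k\<close>, \<open>v\<close> is injective on \<open>{..<k}\<close>,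
    so the span coefficients of \<open>v k\<close> become the recurrence.\<close>
  define k where "k = (LEAST k. v k \<in> span (v ` {..<k}))"
  have "v k \<in> span (v ` {..<k})"
    unfolding k_def using \<open>\<exists>k. _\<close> by (rule LeastI_ex)
  then have "v k \<in> range (\<lambda>c. \<Sum>y\<in>v ` {..<k}. c y *s y)"
    by (simp add: span_finite)
  then obtain c where c: "v k = (\<Sum>y\<in>v ` {..<k}. c y *s y)"
    by blast
  define a where "a i = c (v i)" for i
  have "v j \<notin> span (v ` {..<j})" if "j < k" for j
    using that unfolding k_def by (rule not_less_Least)
  then have "inj_on v {..<k}"
    using independent_image_lessThan[of k v] by simp
  then have base: "v k = (\<Sum>i<k. a i *s v i)"
    unfolding c a_def by (simp add: sum.reindex)
  have "v (n + k) = (\<Sum>i<k. a i *s v (n + i))" for n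
  proof (induction n)
    case (Suc n)
    have "v (Suc n + k) = L (\<Sum>i<k. a i *s v (n + i))"
      using Suc.IH by (simp add: step)
    also have "\<dots> = (\<Sum>i<k. a i *s v (Suc n + i))"
      by (simp add: L.sum L.scale step)
    finally show ?case .
  qed (simp add: base)
  then show ?thesis
    by (intro exI[of _ k] exI[of _ a] allI)
qed

end

lemma sum_fun_apply: "(\<Sum>i\<in>S. f i) x = (\<Sum>i\<in>S. f i x)"
  by (induction S rule: infinite_finite_induct) auto

lemma linear_recurrence_of_finite_linear_system:
  fixes v :: "nat \<Rightarrow> 'x \<Rightarrow> 'a::field"
  assumes H: "finite H" and closed: "\<And>h j. h \<in> H \<Longrightarrow> j \<in> J \<Longrightarrow> \<sigma> h j \<in> H"
    and step: "\<And>n h. h \<in> H \<Longrightarrow> v (Suc n) h = (\<Sum>j\<in>J. T h j * v n (\<sigma> h j))"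
  shows "\<exists>k a. \<forall>n. \<forall>h\<in>H. v (n + k) h = (\<Sum>i<k. a i * v (n + i) h)"
proof -
  define scale :: "'a \<Rightarrow> ('x \<Rightarrow> 'a) \<Rightarrow> 'x \<Rightarrow> 'a" where "scale c w x = c * w x" for c w x
  interpret pointwise: vector_space scale
    by unfold_locales (auto simp: scale_def fun_eq_iff algebra_simps)
  define \<delta> :: "'x \<Rightarrow> 'x \<Rightarrow> 'a" where "\<delta> h x = (if x = h then 1 else 0)" for h x
  define w where "w n h = (if h \<in> H then v n h else 0)" for n h
  define L where "L y h = (if h \<in> H then \<Sum>j\<in>J. T h j * y (\<sigma> h j) else 0)" for y h
  have "Vector_Spaces.linear scale scale L"
    by unfold_locales
      (auto simp: L_def scale_def fun_eq_iff algebra_simps sum.distrib sum_distrib_left)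
  moreover have "w (Suc n) = L (w n)" for n
    by (auto simp: L_def w_def step closed intro!: sum.cong)
  moreover have "w n \<in> pointwise.span (\<delta> ` H)" for n
  proof -
    have "w n = (\<Sum>h\<in>H. scale (w n h) (\<delta> h))"
    proof
      fix x
      have "(\<Sum>h\<in>H. scale (w n h) (\<delta> h)) x = (\<Sum>h\<in>H. if h = x then w n x else 0)"
        unfolding sum_fun_apply by (rule sum.cong) (auto simp: scale_def \<delta>_def)
      also have "\<dots> = w n x"
        by (simp add: sum.delta[OF H] w_def)
      finally show "w n x = (\<Sum>h\<in>H. scale (w n h) (\<delta> h)) x"
        by simp
    qed
    also have "\<dots> \<in> pointwise.span (\<delta> ` H)"
      by (intro pointwise.span_sum pointwise.span_scale pointwise.span_base imageI)
    finally show ?thesis .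
  qed
  ultimately obtain k a where rec: "\<forall>n. w (n + k) = (\<Sum>i<k. scale (a i) (w (n + i)))"
    using pointwise.linear_recurrence_of_iterates[OF finite_imageI[OF H]] by meson
  have "v (n + k) h = (\<Sum>i<k. a i * v (n + i) h)" if "h \<in> H" for n h
    using fun_cong[OF spec[OF rec, of n], of h] that by (simp add: sum_fun_apply scale_def w_def)
  then show ?thesis
    by blast
qed

section \<open>Coefficients with integer indices\<close>

definition icoeff :: "'a::zero poly \<Rightarrow> int \<Rightarrow> 'a" where
  "icoeff P k = (if k < 0 then 0 else coeff P (nat k))"

lemma finite_icoeff_support: "finite {k. icoeff P k \<noteq> 0}"
proof (rule finite_subset)
  show "{k. icoeff P k \<noteq> 0} \<subseteq> {0..int (degree P)}"
    by (auto simp: icoeff_def nat_le_iff dest!: le_degree)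
qed simp

lemma icoeff_mult:
  fixes A B :: "'a::comm_semiring_0 poly"
  shows "icoeff (A * B) k = (\<Sum>l\<le>degree A. coeff A l * icoeff B (k - int l))"
proof (cases "k < 0")
  case False
  then obtain j where k: "k = int j"
    by (metis nonneg_int_cases not_less)
  have "coeff (A * B) j = (\<Sum>l\<le>j. coeff A l * coeff B (j - l))"
    by (rule coeff_mult)
  also have "\<dots> = (\<Sum>l\<le>j + degree A. coeff A l * icoeff B (int j - int l))"
    by (rule sum.mono_neutral_cong_left) (auto simp: icoeff_def nat_diff_distrib)
  also have "\<dots> = (\<Sum>l\<le>degree A. coeff A l * icoeff B (int j - int l))"
    by (rule sum.mono_neutral_right) (auto simp: coeff_eq_0)
  finally show ?thesis
    by (simp add: icoeff_def k)
qed (simp add: icoeff_def)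

lemma pcompose_monom_monom:
  fixes c :: "'a::comm_semiring_1"
  shows "pcompose (monom c i) (monom 1 b) = monom c (i * b)"
proof (induction i)
  case 0
  then show ?case
    by (simp add: monom_0)
next
  case (Suc i)
  then show ?case
    by (simp add: monom_Suc pcompose_pCons mult_monom)
qed

lemma coeff_pcompose_monom:
  fixes g :: "'a::comm_semiring_1 poly"
  assumes "0 < b"
  shows "coeff (pcompose g (monom 1 b)) j = (if b dvd j then coeff g (j div b) else 0)"
proof -
  have "pcompose g (monom 1 b) = (\<Sum>i\<le>degree g. monom (coeff g i) (i * b))"
    by (subst (1) poly_as_sum_of_monoms[symmetric]) (simp add: pcompose_sum pcompose_monom_monom)
  moreover have "i * b = j \<longleftrightarrow> b dvd j \<and> i = j div b" for i
    using assms by (auto simp: dvd_div_mult_self)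
  ultimately have "coeff (pcompose g (monom 1 b)) j
      = (\<Sum>i\<le>degree g. if i = j div b then (if b dvd j then coeff g i else 0) else 0)"
    by (auto simp: coeff_sum coeff_monom intro!: sum.cong)
  also have "\<dots> = (if b dvd j then coeff g (j div b) else 0)"
    by (simp add: sum.delta coeff_eq_0)
  finally show ?thesis .
qed

lemma icoeff_pcompose_monom:
  fixes g :: "'a::comm_semiring_1 poly"
  assumes "0 < b"
  shows "icoeff (pcompose g (monom 1 b)) k = (if int b dvd k then icoeff g (k div int b) else 0)"
proof (cases "k < 0")
  case True
  then have "k div int b < 0"
    using assms by (simp add: div_neg_pos_less0)
  with True show ?thesis
    by (simp add: icoeff_def)
next
  case False
  then obtain j where "k = int j"
    by (metis nonneg_int_cases not_less)
  then show ?thesis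
    using assms by (simp add: icoeff_def coeff_pcompose_monom flip: zdiv_int)
qed

lemma Fpoly_eq_mult: "Fpoly p q b n = q * Fpoly p 1 b n"
  by (simp add: Fpoly_def)

lemma Fpoly_one_Suc: "Fpoly p 1 b (Suc n) = p * pcompose (Fpoly p 1 b n) (monom 1 b)"
proof -
  have "Fpoly p 1 b (Suc n) = pcompose p (monom 1 1) * (\<Prod>i<n. pcompose p (monom 1 (b ^ Suc i)))"
    unfolding Fpoly_def by (subst prod.lessThan_Suc_shift) simp
  also have "pcompose p (monom 1 1) = p"
    by (simp add: monom_altdef)
  also have "(\<Prod>i<n. pcompose p (monom 1 (b ^ Suc i))) = pcompose (Fpoly p 1 b n) (monom 1 b)"
    unfolding Fpoly_def mult_1_left pcompose_prod
    by (simp add: pcompose_monom_monom mult.commute flip: pcompose_assoc)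
  finally show ?thesis .
qed

lemma cF_eq_icoeff: "cF p q b n = icoeff (Fpoly p q b n)"
  by (simp add: fun_eq_iff cF_def icoeff_def)

lemma finite_cF_support: "finite {k. cF p q b n k \<noteq> 0}"
  by (simp add: cF_eq_icoeff finite_icoeff_support)

lemma cF_eq_convolution: "cF p q b n k = (\<Sum>l\<le>degree q. coeff q l * cF p 1 b n (k - int l))"
  by (simp add: cF_eq_icoeff Fpoly_eq_mult[of p q] icoeff_mult)

lemma cF_one_Suc:
  assumes "0 < b"
  shows "cF p 1 b (Suc n) k = (\<Sum>l\<le>degree p. coeff p l *
    (if int b dvd k - int l then cF p 1 b n ((k - int l) div int b) else 0))"
  unfolding cF_eq_icoeff Fpoly_one_Suc icoeff_mult
  using assms by (simp add: icoeff_pcompose_monom)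

section \<open>Correlation sums\<close>

lemma infsum_eq_sum_superset:
  fixes f :: "'a \<Rightarrow> 'b::{comm_monoid_add, t2_space}"
  assumes "finite S" "S \<subseteq> A" "\<And>x. x \<in> A \<Longrightarrow> x \<notin> S \<Longrightarrow> f x = 0"
  shows "infsum f A = sum f S"
proof -
  have "infsum f A = infsum f S"
    by (rule infsum_cong_neutral) (use assms in auto)
  then show ?thesis
    using assms(1) by simp
qed

lemma infsum_linear_combination:
  fixes \<phi> :: "'b \<Rightarrow> 'a \<Rightarrow> 'c::{semiring_0, t2_space}"
  assumes F: "finite F" and supp: "\<And>y. y \<in> F \<Longrightarrow> finite {x. \<phi> y x \<noteq> 0}"
  shows "(\<Sum>\<^sub>\<infinity>x. \<Sum>y\<in>F. c y * \<phi> y x) = (\<Sum>y\<in>F. c y * (\<Sum>\<^sub>\<infinity>x. \<phi> y x))"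
proof -
  define S where "S = (\<Union>y\<in>F. {x. \<phi> y x \<noteq> 0})"
  have S: "finite S"
    using F supp by (simp add: S_def)
  have "(\<Sum>\<^sub>\<infinity>x. \<Sum>y\<in>F. c y * \<phi> y x) = (\<Sum>x\<in>S. \<Sum>y\<in>F. c y * \<phi> y x)"
    by (rule infsum_eq_sum_superset[OF S]) (auto simp: S_def intro!: sum.neutral)
  also have "\<dots> = (\<Sum>y\<in>F. c y * (\<Sum>x\<in>S. \<phi> y x))"
    by (simp add: sum.swap[of _ S] sum_distrib_left)
  also have "\<dots> = (\<Sum>y\<in>F. c y * (\<Sum>\<^sub>\<infinity>x. \<phi> y x))"
    by (intro sum.cong refl arg_cong2[where f = "(*)"] infsum_eq_sum_superset[OF S, symmetric])
      (auto simp: S_def)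
  finally show ?thesis .
qed

lemma infsum_int_split_residues:
  fixes F :: "int \<Rightarrow> 'a::{comm_monoid_add, t2_space}"
  assumes F: "finite {k. F k \<noteq> 0}" and b: "0 < b"
  shows "(\<Sum>\<^sub>\<infinity>k. F k) = (\<Sum>r<b. \<Sum>\<^sub>\<infinity>K. F (int b * K + int r))"
proof -
  define T where "T = (\<lambda>k. k div int b) ` {k. F k \<noteq> 0}"
  have T: "finite T"
    using F by (simp add: T_def)
  have inT: "K \<in> T" if "F (int b * K + int r) \<noteq> 0" "r < b" for K r
    using that b by (auto simp: T_def intro!: image_eqI[of _ _ "int b * K + int r"])
  have "bij_betw (\<lambda>(r, K). int b * K + int r) ({..<b} \<times> UNIV) UNIV"
    by (rule bij_betwI[where g = "\<lambda>k. (nat (k mod int b), k div int b)"])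
      (use b in \<open>auto simp: nat_less_iff\<close>)
  then have "(\<Sum>\<^sub>\<infinity>k. F k) = (\<Sum>\<^sub>\<infinity>(r, K)\<in>{..<b} \<times> UNIV. F (int b * K + int r))"
    by (simp add: infsum_reindex_bij_betw[symmetric] case_prod_beta')
  also have "\<dots> = (\<Sum>(r, K)\<in>{..<b} \<times> T. F (int b * K + int r))"
    by (rule infsum_eq_sum_superset) (use T inT in auto)
  also have "\<dots> = (\<Sum>r<b. \<Sum>K\<in>T. F (int b * K + int r))"
    by (simp add: sum.cartesian_product)
  also have "\<dots> = (\<Sum>r<b. \<Sum>\<^sub>\<infinity>K. F (int b * K + int r))"
    by (intro sum.cong refl infsum_eq_sum_superset[OF T, symmetric]) (use inT in auto)
  finally show ?thesis .
qed

definition correlation ::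
    "(int \<Rightarrow> 'a::{comm_semiring_1, t2_space}) \<Rightarrow> 'i set \<Rightarrow> ('i \<Rightarrow> int) \<Rightarrow> 'a"
  where "correlation g I h = (\<Sum>\<^sub>\<infinity>k. \<Prod>i\<in>I. g (k + h i))"

lemma correlation_cong: "(\<And>i. i \<in> I \<Longrightarrow> h i = h' i) \<Longrightarrow> correlation g I h = correlation g I h'"
  unfolding correlation_def by (intro infsum_cong prod.cong) auto

lemma correlation_restrict: "correlation g I (restrict h I) = correlation g I h"
  by (rule correlation_cong) simp

lemma finite_support_prod_shift:
  fixes g :: "int \<Rightarrow> 'a::comm_semiring_1"
  assumes g: "finite {k. g k \<noteq> 0}" and I: "finite I" "I \<noteq> {}"
  shows "finite {k. (\<Prod>i\<in>I. g (k + h i)) \<noteq> 0}"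
proof -
  obtain i0 where i0: "i0 \<in> I"
    using I(2) by blast
  have "{k. (\<Prod>i\<in>I. g (k + h i)) \<noteq> 0} \<subseteq> (\<lambda>j. j - h i0) ` {k. g k \<noteq> 0}"
  proof
    fix k
    assume k: "k \<in> {k. (\<Prod>i\<in>I. g (k + h i)) \<noteq> 0}"
    have "g (k + h i0) \<noteq> 0"
    proof
      assume "g (k + h i0) = 0"
      then have "(\<Prod>i\<in>I. g (k + h i)) = 0"
        using I(1) i0 by (intro prod_zero) auto
      with k show False
        by simp
    qed
    then show "k \<in> (\<lambda>j. j - h i0) ` {k. g k \<noteq> 0}"
      by (intro image_eqI[of _ _ "k + h i0"]) auto
  qed
  then show ?thesis
    using g by (rule finite_subset[OF _ finite_imageI])
qed

lemma correlation_convolution: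
  assumes I: "finite I" "I \<noteq> {}" and g: "finite {k. g k \<noteq> 0}"
    and g': "\<And>k. g' k = (\<Sum>l\<le>d. c l * g (k - int l))"
  shows "correlation g' I h = (\<Sum>f\<in>PiE I (\<lambda>_. {..d}).
    (\<Prod>i\<in>I. c (f i)) * correlation g I (\<lambda>i. h i - int (f i)))"
proof -
  have "(\<Prod>i\<in>I. g' (k + h i)) = (\<Sum>f\<in>PiE I (\<lambda>_. {..d}).
      (\<Prod>i\<in>I. c (f i)) * (\<Prod>i\<in>I. g (k + (h i - int (f i)))))" for k
  proof -
    have "(\<Prod>i\<in>I. g' (k + h i))
        = (\<Sum>f\<in>PiE I (\<lambda>_. {..d}). \<Prod>i\<in>I. c (f i) * g (k + h i - int (f i)))"
      unfolding g' by (rule prod_sum_PiE) (simp_all add: I)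
    then show ?thesis
      by (simp add: prod.distrib add_diff_eq)
  qed
  then have "correlation g' I h = (\<Sum>\<^sub>\<infinity>k. \<Sum>f\<in>PiE I (\<lambda>_. {..d}).
      (\<Prod>i\<in>I. c (f i)) * (\<Prod>i\<in>I. g (k + (h i - int (f i)))))"
    by (simp add: correlation_def)
  also have "\<dots> = (\<Sum>f\<in>PiE I (\<lambda>_. {..d}).
      (\<Prod>i\<in>I. c (f i)) * correlation g I (\<lambda>i. h i - int (f i)))"
    unfolding correlation_def
    by (rule infsum_linear_combination) (simp_all add: finite_PiE I finite_support_prod_shift[OF g I])
  finally show ?thesis .
qed

lemma finite_support_dilation:
  assumes "finite {k. g k \<noteq> 0}"
  shows "finite {k. (if int b dvd k then g (k div int b) else 0) \<noteq> 0}"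
proof (rule finite_subset[OF _ finite_imageI[OF assms]])
  show "{k. (if int b dvd k then g (k div int b) else 0) \<noteq> 0} \<subseteq> (\<lambda>K. int b * K) ` {k. g k \<noteq> 0}"
  proof
    fix k
    assume "k \<in> {k. (if int b dvd k then g (k div int b) else 0) \<noteq> 0}"
    then have "int b dvd k" "g (k div int b) \<noteq> 0"
      by (simp_all split: if_splits)
    then show "k \<in> (\<lambda>K. int b * K) ` {k. g k \<noteq> 0}"
      by (intro image_eqI[of _ _ "k div int b"]) simp_all
  qed
qed

lemma correlation_dilation:
  fixes b :: nat and g :: "int \<Rightarrow> 'a::{comm_semiring_1, t2_space}"
  assumes I: "finite I" "I \<noteq> {}" and g: "finite {k. g k \<noteq> 0}" and b: "0 < b"
  shows "correlation (\<lambda>k. if int b dvd k then g (k div int b) else 0) I h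
    = (\<Sum>r<b. if \<forall>i\<in>I. int b dvd int r + h i
               then correlation g I (\<lambda>i. (int r + h i) div int b) else 0)"
proof -
  define G where "G k = (if int b dvd k then g (k div int b) else 0)" for k
  have G: "G (int b * K + int r + h i)
      = (if int b dvd int r + h i then g (K + (int r + h i) div int b) else 0)" for K r i
  proof -
    have "int b * K + int r + h i = (int r + h i) + int b * K"
      by simp
    moreover have "int b dvd (int r + h i) + int b * K \<longleftrightarrow> int b dvd int r + h i"
      by (rule dvd_add_left_iff) simp
    moreover have "((int r + h i) + int b * K) div int b = K + (int r + h i) div int b"
      using b by simp
    ultimately show ?thesis
      by (simp only: G_def)
  qed
  have "(\<Sum>\<^sub>\<infinity>K. \<Prod>i\<in>I. G (int b * K + int r + h i))
      = (if \<forall>i\<in>I. int b dvd int r + h i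
         then correlation g I (\<lambda>i. (int r + h i) div int b) else 0)" for r
  proof (cases "\<forall>i\<in>I. int b dvd int r + h i")
    case True
    then show ?thesis
      by (simp add: G correlation_def cong: prod.cong)
  next
    case False
    then obtain i1 where "i1 \<in> I" "\<not> int b dvd int r + h i1"
      by blast
    then have "(\<Prod>i\<in>I. G (int b * K + int r + h i)) = 0" for K
      using I(1) by (intro prod_zero bexI[of _ i1]) (simp_all add: G)
    then show ?thesis
      unfolding if_not_P[OF False] by (simp add: infsum_0)
  qed
  moreover have "finite {k. G k \<noteq> 0}"
    unfolding G_def using g by (rule finite_support_dilation)
  then have "correlation G I h = (\<Sum>r<b. \<Sum>\<^sub>\<infinity>K. \<Prod>i\<in>I. G (int b * K + int r + h i))"
    unfolding correlation_def by (rule infsum_int_split_residues[OF finite_support_prod_shift[OF _ I] b])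
  ultimately have "correlation G I h = (\<Sum>r<b. if \<forall>i\<in>I. int b dvd int r + h i
      then correlation g I (\<lambda>i. (int r + h i) div int b) else 0)"
    by simp
  then show ?thesis
    by (simp only: G_def[abs_def])
qed

section \<open>The linear system for the correlations of the coefficients\<close>

lemma correlation_cF_one_Suc:
  assumes I: "finite I" "I \<noteq> {}" and b: "0 < b"
  shows "correlation (cF p 1 b (Suc n)) I h = (\<Sum>(f, r)\<in>PiE I (\<lambda>_. {..degree p}) \<times> {..<b}.
    (if \<forall>i\<in>I. int b dvd int r + (h i - int (f i)) then \<Prod>i\<in>I. coeff p (f i) else 0) *
    correlation (cF p 1 b n) I (restrict (\<lambda>i. (int r + (h i - int (f i))) div int b) I))"
proof -
  have "correlation (cF p 1 b (Suc n)) I h = (\<Sum>f\<in>PiE I (\<lambda>_. {..degree p}).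
      (\<Prod>i\<in>I. coeff p (f i)) * correlation (\<lambda>k. if int b dvd k then cF p 1 b n (k div int b) else 0)
        I (\<lambda>i. h i - int (f i)))"
    by (rule correlation_convolution[OF I finite_support_dilation[OF finite_cF_support]])
      (rule cF_one_Suc[OF b])
  also have "\<dots> = (\<Sum>f\<in>PiE I (\<lambda>_. {..degree p}). \<Sum>r<b.
      (if \<forall>i\<in>I. int b dvd int r + (h i - int (f i)) then \<Prod>i\<in>I. coeff p (f i) else 0) *
      correlation (cF p 1 b n) I (restrict (\<lambda>i. (int r + (h i - int (f i))) div int b) I))"
    by (simp add: correlation_dilation[OF I finite_cF_support b] sum_distrib_left correlation_restrict)
      (intro sum.cong refl; simp)
  finally show ?thesis
    by (simp add: sum.cartesian_product)
qed

lemma abs_shift_div_le: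
  fixes A b f h r :: int
  assumes b: "2 \<le> b" and f: "0 \<le> f" "f \<le> A" and h: "\<bar>h\<bar> \<le> A" and r: "0 \<le> r" "r < b"
  shows "\<bar>(r + (h - f)) div b\<bar> \<le> A"
proof -
  have "A * 2 \<le> A * b"
    using b h by (intro mult_left_mono) auto
  then have lo: "- A * b \<le> r + (h - f)" and hi: "r + (h - f) < (A + 1) * b"
    using f h r by (auto simp: algebra_simps)
  have b0: "0 < b"
    using b by simp
  have "- A \<le> (r + (h - f)) div b"
    using zdiv_mono1[OF lo b0] nonzero_mult_div_cancel_right[of b "- A"] b0 by simp
  moreover have "b * ((r + (h - f)) div b) \<le> r + (h - f)"
    using pos_mod_sign[OF b0, of "r + (h - f)"] mult_div_mod_eq[of b "r + (h - f)"] by linarith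
  with hi have "b * ((r + (h - f)) div b) < b * (A + 1)"
    by (simp add: mult.commute)
  with b0 have "(r + (h - f)) div b < A + 1"
    by simp
  ultimately show ?thesis
    by (simp add: abs_le_iff)
qed

lemma restrict_shift_div_in_box:
  assumes b: "2 \<le> b" and d: "int d \<le> A" and h: "h \<in> PiE I (\<lambda>_. {-A..A})"
    and f: "f \<in> PiE I (\<lambda>_. {..d})" and r: "r < b"
  shows "restrict (\<lambda>i. (int r + (h i - int (f i))) div int b) I \<in> PiE I (\<lambda>_. {-A..A})"
proof -
  have "(int r + (h i - int (f i))) div int b \<in> {-A..A}" if "i \<in> I" for i
  proof -
    have "\<bar>(int r + (h i - int (f i))) div int b\<bar> \<le> A"
    proof (rule abs_shift_div_le)
      show "\<bar>h i\<bar> \<le> A" and "int (f i) \<le> A"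
        using h f d that by (auto simp: PiE_iff)
    qed (use b r in auto)
    then show ?thesis
      by (simp add: abs_le_iff)
  qed
  then show ?thesis
    by simp
qed

lemma correlation_cF_linear_recurrence:
  fixes I :: "'i set" and A :: int
  assumes I: "finite I" "I \<noteq> {}" and b: "2 \<le> b" and A: "int (degree p) \<le> A"
  shows "\<exists>k a. \<forall>n h. (\<forall>i\<in>I. \<bar>h i\<bar> \<le> A) \<longrightarrow>
    correlation (cF p 1 b (n + k)) I h = (\<Sum>j<k. a j * correlation (cF p 1 b (n + j)) I h)"
proof -
  define H where "H = PiE I (\<lambda>_. {-A..A})"
  define D where "D = PiE I (\<lambda>_. {..degree p})"
  define J where "J = D \<times> {..<b}"
  define T where "T h = (\<lambda>(f, r). if \<forall>i\<in>I. int b dvd int r + (h i - int (f i))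
    then \<Prod>i\<in>I. coeff p (f i) else 0)" for h :: "'i \<Rightarrow> int"
  \<comment> \<open>Shifts matter only on \<open>I\<close>; restricting them keeps the state space \<open>H\<close> finite.\<close>
  define \<sigma> where "\<sigma> h = (\<lambda>(f, r). restrict (\<lambda>i. (int r + (h i - int (f i))) div int b) I)"
    for h :: "'i \<Rightarrow> int"
  have fin: "finite H"
    by (simp add: H_def I finite_PiE)
  have closed: "\<sigma> h fr \<in> H" if h: "h \<in> H" and "fr \<in> J" for h fr
  proof -
    obtain f r where fr: "fr = (f, r)" and f: "f \<in> D" and r: "r < b"
      using \<open>fr \<in> J\<close> by (auto simp: J_def)
    show ?thesis
      using b A h f r unfolding fr \<sigma>_def prod.case H_def D_def by (rule restrict_shift_div_in_box)
  qed
  have step: "correlation (cF p 1 b (Suc n)) I h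
      = (\<Sum>fr\<in>J. T h fr * correlation (cF p 1 b n) I (\<sigma> h fr))" for n h
    using b by (simp add: correlation_cF_one_Suc[OF I] J_def D_def T_def \<sigma>_def case_prod_beta')
  obtain k a where rec: "\<forall>n. \<forall>h\<in>H.
      correlation (cF p 1 b (n + k)) I h = (\<Sum>j<k. a j * correlation (cF p 1 b (n + j)) I h)"
    using linear_recurrence_of_finite_linear_system[of H J \<sigma> "\<lambda>n. correlation (cF p 1 b n) I" T,
        OF fin closed step]
    by blast
  show ?thesis
  proof (intro exI[of _ k] exI[of _ a] allI impI)
    fix n h
    assume bounded: "\<forall>i\<in>I. \<bar>h i\<bar> \<le> A"
    have "h i \<in> {-A..A}" if "i \<in> I" for i
      using bounded that by (auto simp: abs_le_iff)
    then have "restrict h I \<in> H"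
      by (simp add: H_def)
    with rec show "correlation (cF p 1 b (n + k)) I h
        = (\<Sum>j<k. a j * correlation (cF p 1 b (n + j)) I h)"
      unfolding correlation_restrict[symmetric, of _ I h] by blast
  qed
qed

lemma u_eq_correlation:
  "u p q b \<alpha> n
    = correlation (cF p q b n) (Sigma {..<length \<alpha>} (\<lambda>j. {..<\<alpha> ! j})) (\<lambda>i. int (fst i))"
proof -
  have "(\<Prod>j<length \<alpha>. cF p q b n (k + int j) ^ (\<alpha> ! j))
      = (\<Prod>i\<in>Sigma {..<length \<alpha>} (\<lambda>j. {..<\<alpha> ! j}). cF p q b n (k + int (fst i)))" for k
  proof -
    have "(\<Prod>j<length \<alpha>. cF p q b n (k + int j) ^ (\<alpha> ! j))
        = (\<Prod>j<length \<alpha>. \<Prod>t<\<alpha> ! j. cF p q b n (k + int j))"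
      by simp
    also have "\<dots> = (\<Prod>i\<in>Sigma {..<length \<alpha>} (\<lambda>j. {..<\<alpha> ! j}). cF p q b n (k + int (fst i)))"
      by (subst prod.Sigma) (auto simp: case_prod_beta')
    finally show ?thesis .
  qed
  then show ?thesis
    by (simp add: u_def correlation_def)
qed

theorem theorem4p1:
  fixes p q :: "complex poly" and b :: nat and \<alpha> :: "nat list"
  assumes "b \<ge> 2"
    and "\<exists>j<length \<alpha>. \<alpha> ! j > 0"
  shows "\<exists>P Q :: complex poly. poly Q 0 \<noteq> 0 \<and>
           Abs_fps (u p q b \<alpha>) = fps_of_poly P / fps_of_poly Q"
proof -
  define I where "I = Sigma {..<length \<alpha>} (\<lambda>j. {..<\<alpha> ! j})"
  define D where "D = PiE I (\<lambda>_. {..degree q})"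
  \<comment> \<open>\<open>A \<ge> deg p\<close> makes the box of shifts invariant,
    and it bounds the initial shifts \<open>j - l\<close>.\<close>
  define A where "A = int (max (degree p) (max (degree q) (length \<alpha>)))"
  have I: "finite I" "I \<noteq> {}"
    using assms(2) by (auto simp: I_def)
  obtain k a where rec: "\<And>n h. \<forall>i\<in>I. \<bar>h i\<bar> \<le> A \<Longrightarrow>
      correlation (cF p 1 b (n + k)) I h = (\<Sum>j<k. a j * correlation (cF p 1 b (n + j)) I h)"
    using correlation_cF_linear_recurrence[OF I assms(1), of p A] by (auto simp: A_def)
  have u: "u p q b \<alpha> n = (\<Sum>f\<in>D. (\<Prod>i\<in>I. coeff q (f i)) *
      correlation (cF p 1 b n) I (\<lambda>i. int (fst i) - int (f i)))" for n
    unfolding u_eq_correlation I_def[symmetric] D_def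
    by (rule correlation_convolution[OF I finite_cF_support cF_eq_convolution])
  have shifts_bounded: "\<forall>i\<in>I. \<bar>int (fst i) - int (f i)\<bar> \<le> A" if "f \<in> D" for f
    using that by (force simp: D_def I_def A_def PiE_iff)
  have "u p q b \<alpha> (n + k) = (\<Sum>j<k. a j * u p q b \<alpha> (n + j))" for n
    unfolding u
    by (rule linear_recurrence_sum[where
          w = "\<lambda>f m. correlation (cF p 1 b m) I (\<lambda>i. int (fst i) - int (f i))"])
      (simp add: rec shifts_bounded)
  then show ?thesis
    by (rule rational_fps_of_linear_recurrence)
qed

end
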